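(* Let $\mathcal{C}$ be a combinatorial class with generating function $C(x)=\sum_{n\ge0}c_nx^n$, not reduced to its objects of size $0$, with radius of convergence $\rho>0$; let $C^\bullet(x)=xC'(x)$ and fix $x\in(0,\rho)$. Assume that for every $y\in(0,x]$ a Boltzmann sampler $\Gamma_y(\Theta\mathcal{C})$ with parameter $y$ for the pointed class $\Theta\mathcal{C}$ is available. Consider the procedure: draw $U\in[0,1]$ with density $u\mapsto \dfrac{C^\bullet(xu)}{u\,(C(x)-c_0)}$; independently, with probability $c_0/C(x)$ output a uniformly random object of size $0$ of $\mathcal{C}$, and otherwise run $\Gamma_{Ux}(\Theta\mathcal{C})$ and output the underlying object of $\mathcal{C}$ (forgetting the point). Then the output is distributed as a Boltzmann sampler for $\mathcal{C}$ with parameter $x$: each $a\in\mathcal{C}$ is output with probability $x^{|a|}/C(x)$. *)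

theory Defs
  imports "HOL-Probability.Probability"
begin

definition gf :: "'a set \<Rightarrow> ('a \<Rightarrow> nat) \<Rightarrow> real \<Rightarrow> real" where
  "gf A sz y = (\<Sum>n. real (card {a\<in>A. sz a = n}) * y ^ n)"

text \<open>The pointed class: objects together with a distinguished atom 1..|a|;
  size of (a,i) is the size of a.\<close>
definition pointed :: "('a \<Rightarrow> nat) \<Rightarrow> ('a \<times> nat) set" where
  "pointed sz = {(a, i). 1 \<le> i \<and> i \<le> sz a}"

definition boltzmann :: "'a set \<Rightarrow> ('a \<Rightarrow> nat) \<Rightarrow> real \<Rightarrow> 'a pmf \<Rightarrow> bool" where
  "boltzmann A sz y P \<longleftrightarrow>
     (\<forall>a. pmf P a = (if a \<in> A then y ^ sz a / gf A sz y else 0))"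

definition sampler_proc ::
    "('a \<Rightarrow> nat) \<Rightarrow> real \<Rightarrow> (real \<Rightarrow> ('a \<times> nat) pmf) \<Rightarrow> 'a measure" where
  "sampler_proc sz x Gam =
     (let C = gf UNIV sz;
          c0 = real (card {a. sz a = 0});
          Cb = (\<lambda>y. y * deriv C y);
          U = density (restrict_space lborel {0<..1})
                (\<lambda>u. ennreal (Cb (x * u) / (u * (C x - c0))))
      in bind (measure_pmf (bernoulli_pmf (c0 / C x)))
           (\<lambda>b. if b then measure_pmf (pmf_of_set {a. sz a = 0})
                else bind U (\<lambda>u. measure_pmf (map_pmf fst (Gam (u * x))))))"

end

theory Submission
  imports Defs
begin

text \<open>
  Write c n for the number of objects of size n, C for the generating function and
  D = C' for its derivative.  Forgetting the point of a pointed Boltzmann sampler with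
  parameter y yields each object a with the size-biased probability
  |a| y^|a| / (y D y).  Mixing these over y = u x, with u drawn from the density
  x D(x u) / (C x - c 0) on (0,1], gives an object of size n > 0 the mass
  x^n / (C x - c 0) times the integral of n u^(n-1) over (0,1], i.e. x^n / (C x - c 0);
  the density itself integrates to 1 because x D(x u) is the derivative of C(x u).
  Finally the Bernoulli choice between the size-0 objects (probability c 0 / C x) and this
  mixture produces exactly the Boltzmann weights x^|a| / C x.
\<close>

lemma nn_integral_unit_interval_FTC:
  fixes f F :: "real \<Rightarrow> real"
  assumes f_meas: "f \<in> borel_measurable borel"
    and deriv: "\<And>u. u \<in> {0..1} \<Longrightarrow> (F has_real_derivative f u) (at u)"
    and nonneg: "\<And>u. u \<in> {0..1} \<Longrightarrow> 0 \<le> f u"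
  shows "(\<integral>\<^sup>+u. ennreal (f u) \<partial>restrict_space lborel {0<..1}) = ennreal (F 1 - F 0)"
proof -
  have "(\<integral>\<^sup>+u. ennreal (f u) \<partial>restrict_space lborel {0<..1})
      = (\<integral>\<^sup>+u. ennreal (f u) * indicator {0<..1} u \<partial>lborel)"
    by (subst nn_integral_restrict_space) auto
  also have "\<dots> = (\<integral>\<^sup>+u. ennreal (f u) * indicator {0..1} u \<partial>lborel)"
    by (rule nn_integral_cong_AE)
      (use AE_lborel_singleton[of "0::real"] in eventually_elim, auto simp: indicator_def)
  also have "\<dots> = ennreal (F 1 - F 0)"
    by (rule nn_integral_FTC_Icc[OF f_meas deriv nonneg]) auto
  finally show ?thesis .
qed

lemma powser_pointing:
  fixes c :: "nat \<Rightarrow> real"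
  assumes "ereal (norm y) < conv_radius c"
  shows "summable (\<lambda>n. real n * c n * y ^ n)"
    and "(\<Sum>n. real n * c n * y ^ n) = y * (\<Sum>n. diffs c n * y ^ n)"
proof -
  define f where "f n = real n * c n * y ^ n" for n
  obtain K where K: "norm y < K" "ereal K < conv_radius c"
    using ereal_dense2[OF assms] by auto
  have "summable (\<lambda>n. c n * z ^ n)" if "norm z < K" for z
  proof (rule summable_in_conv_radius)
    have "ereal (norm z) < ereal K" using that by simp
    then show "ereal (norm z) < conv_radius c" using K(2) by (rule order.strict_trans)
  qed
  then have "summable (\<lambda>n. diffs c n * y ^ n)"
    using K(1) by (intro termdiff_converges[of y K]) auto
  then have sums: "(\<lambda>n. f (Suc n)) sums (y * (\<Sum>n. diffs c n * y ^ n))"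
    unfolding f_def diffs_def using summable_sums[THEN sums_mult, of _ y]
    by (simp add: mult_ac)
  then have "f sums (y * (\<Sum>n. diffs c n * y ^ n))"
    using sums_Suc_iff[of f] by (simp add: f_def)
  then show "summable f" "suminf f = y * (\<Sum>n. diffs c n * y ^ n)"
    by (auto simp: sums_iff)
qed

lemma measurable_measure_pmf_family:
  fixes P :: "'b \<Rightarrow> 'a pmf"
  assumes countable: "countable (UNIV :: 'a set)"
    and pmf_meas: "\<And>a. (\<lambda>u. pmf (P u) a) \<in> borel_measurable M"
  shows "(\<lambda>u. measure_pmf (P u)) \<in> measurable M (subprob_algebra (count_space UNIV))"
proof (rule measurable_subprob_algebra)
  fix A :: "'a set"
  interpret count: sigma_finite_measure "count_space (UNIV :: 'a set)"
    by (rule sigma_finite_measure_count_space_countable[OF countable])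
  have mass: "emeasure (P u) A = (\<integral>\<^sup>+a. ennreal (pmf (P u) a) * indicator A a \<partial>count_space UNIV)"
    for u
    by (simp flip: nn_integral_indicator add: nn_integral_measure_pmf)
  have "(\<lambda>p. (\<lambda>a p. ennreal (pmf (P (fst p)) a) * indicator A a) (snd p) p)
      \<in> borel_measurable (M \<Otimes>\<^sub>M count_space UNIV)"
  proof (rule measurable_compose_countable'[OF _ measurable_snd countable])
    show "(\<lambda>p. ennreal (pmf (P (fst p)) a) * indicator A a)
        \<in> borel_measurable (M \<Otimes>\<^sub>M count_space UNIV)" for a
      using measurable_compose[OF measurable_fst pmf_meas] by measurable
  qed
  then have "(\<lambda>(u, a). ennreal (pmf (P u) a) * indicator A a)
      \<in> borel_measurable (M \<Otimes>\<^sub>M count_space UNIV)"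
    by (simp add: case_prod_beta')
  then show "(\<lambda>u. emeasure (P u) A) \<in> borel_measurable M"
    unfolding mass by (rule count.borel_measurable_nn_integral)
qed (auto simp: subprob_space_measure_pmf)

lemma emeasure_bernoulli_mixture:
  assumes M1: "M1 \<in> space (subprob_algebra N)" and M2: "M2 \<in> space (subprob_algebra N)"
    and A: "A \<in> sets N" and p: "0 \<le> p" "p \<le> 1"
  shows "emeasure (measure_pmf (bernoulli_pmf p) \<bind> (\<lambda>b. if b then M1 else M2)) A
       = ennreal p * emeasure M1 A + ennreal (1 - p) * emeasure M2 A"
proof -
  have "(\<lambda>b. if b then M1 else M2) \<in> measurable (bernoulli_pmf p) (subprob_algebra N)"
    unfolding measurable_cong_sets[OF sets_measure_pmf_count_space refl]
      measurable_count_space_eq1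
    using M1 M2 by auto
  then have "emeasure (measure_pmf (bernoulli_pmf p) \<bind> (\<lambda>b. if b then M1 else M2)) A
      = (\<integral>\<^sup>+b. emeasure (if b then M1 else M2) A \<partial>bernoulli_pmf p)"
    using A by (intro emeasure_bind) auto
  also have "\<dots> = ennreal p * emeasure M1 A + ennreal (1 - p) * emeasure M2 A"
    using p by (simp add: mult.commute)
  finally show ?thesis .
qed

lemma card_pointed:
  assumes "finite {a. sz a = n}"
  shows "card {p \<in> pointed sz. sz (fst p) = n} = n * card {a. sz a = n}"
proof -
  have "{p \<in> pointed sz. sz (fst p) = n} = {a. sz a = n} \<times> {1..n}"
    by (auto simp: pointed_def)
  then show ?thesis using assms by (simp add: card_cartesian_product)
qed

lemma gf_pointed:
  assumes "\<And>n. finite {a. sz a = n}"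
  shows "gf (pointed sz) (\<lambda>p. sz (fst p)) y = (\<Sum>n. real n * real (card {a. sz a = n}) * y ^ n)"
  unfolding gf_def using card_pointed[OF assms] by (simp add: mult_ac)

lemma pmf_forget_point:
  assumes "boltzmann (pointed sz) (\<lambda>p. sz (fst p)) y P"
  shows "pmf (map_pmf fst P) a = real (sz a) * y ^ sz a / gf (pointed sz) (\<lambda>p. sz (fst p)) y"
proof -
  define G where "G = gf (pointed sz) (\<lambda>p. sz (fst p)) y"
  define S where "S = {a} \<times> {1..sz a}"
  have P: "pmf P p = (if p \<in> pointed sz then y ^ sz (fst p) / G else 0)" for p
    using assms unfolding boltzmann_def G_def by (cases p) auto
  have "set_pmf P \<subseteq> pointed sz"
    using P by (auto simp: set_pmf_iff split: if_splits)
  then have fiber: "fst -` {a} \<inter> set_pmf P = S \<inter> set_pmf P"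
    by (auto simp: S_def pointed_def)
  have "pmf (map_pmf fst P) a = measure P (fst -` {a} \<inter> set_pmf P)"
    by (simp add: pmf_map measure_Int_set_pmf)
  also have "\<dots> = measure P S"
    by (simp add: fiber measure_Int_set_pmf)
  also have "\<dots> = (\<Sum>p\<in>S. pmf P p)"
    by (simp add: S_def measure_measure_pmf_finite)
  also have "\<dots> = (\<Sum>p\<in>S. y ^ sz a / G)"
    by (rule sum.cong) (auto simp: S_def P pointed_def)
  also have "\<dots> = real (sz a) * y ^ sz a / G"
    by (simp add: S_def)
  finally show ?thesis by (simp add: G_def)
qed

lemma countable_graded:
  fixes sz :: "'a \<Rightarrow> nat"
  assumes "\<And>n. finite {a :: 'a. sz a = n}"
  shows "countable (UNIV :: 'a set)"
proof -
  have "countable (\<Union>n. {a. sz a = n})"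
    by (rule countable_UN) (simp_all add: countable_finite assms)
  moreover have "(\<Union>n. {a. sz a = n}) = UNIV" by auto
  ultimately show ?thesis by metis
qed

locale pointed_setting =
  fixes sz :: "'a \<Rightarrow> nat" and x :: real and Gam :: "real \<Rightarrow> ('a \<times> nat) pmf"
  assumes fin: "\<And>n. finite {a. sz a = n}"
    and nontriv: "\<exists>a. sz a > 0"
    and x_pos: "0 < x"
    and x_lt: "ereal x < conv_radius (\<lambda>n. real (card {a. sz a = n}))"
    and samplers: "\<And>y. y \<in> {0<..x} \<Longrightarrow> boltzmann (pointed sz) (\<lambda>p. sz (fst p)) y (Gam y)"
begin

definition c :: "nat \<Rightarrow> real" where "c n = real (card {a. sz a = n})"

definition C :: "real \<Rightarrow> real" where "C = gf UNIV sz"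

definition D :: "real \<Rightarrow> real" where "D y = (\<Sum>n. diffs c n * y ^ n)"

lemma C_powser: "C y = (\<Sum>n. c n * y ^ n)"
  by (simp add: C_def gf_def c_def)

lemma below_radius:
  assumes "0 \<le> y" "y \<le> x"
  shows "ereal (norm y) < conv_radius c"
proof -
  have "ereal (norm y) \<le> ereal x" using assms by simp
  also have "\<dots> < conv_radius c" using x_lt by (simp add: c_def[abs_def])
  finally show ?thesis .
qed

lemma C_deriv:
  assumes "0 \<le> y" "y \<le> x"
  shows "(C has_real_derivative D y) (at y)"
  unfolding C_powser[abs_def] D_def by (rule has_field_derivative_powser[OF below_radius[OF assms]])

lemma D_measurable [measurable]: "D \<in> borel_measurable borel"
  unfolding D_def by measurable

lemma pointed_gf:
  assumes "0 \<le> y" "y \<le> x"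
  shows "gf (pointed sz) (\<lambda>p. sz (fst p)) y = y * D y"
  using powser_pointing(2)[OF below_radius[OF assms]]
  by (simp add: gf_pointed[OF fin] c_def D_def)

text \<open>C'(y) > 0 on (0,x], because some object has positive size.\<close>
lemma D_pos:
  assumes "0 < y" "y \<le> x"
  shows "0 < D y"
proof -
  obtain a where a: "sz a > 0" using nontriv by blast
  have "0 < c (sz a)"
    using fin[of "sz a"] by (auto simp: c_def card_gt_0_iff)
  then have "0 < (\<Sum>n. real n * c n * y ^ n)"
    using assms a powser_pointing(1)[OF below_radius]
    by (intro suminf_pos2[of _ "sz a"]) (auto simp: c_def)
  then have "0 < y * D y"
    using powser_pointing(2)[OF below_radius] assms by (simp add: D_def)
  then show ?thesis using assms by (simp add: zero_less_mult_iff)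
qed

lemma D_nonneg:
  assumes "0 \<le> y" "y \<le> x"
  shows "0 \<le> D y"
proof (cases "y = 0")
  case True
  then show ?thesis by (simp add: D_def powser_zero diffs_def c_def)
next
  case False
  then show ?thesis using assms D_pos[of y] by simp
qed

text \<open>The class is not reduced to its objects of size 0, so C x > c 0 and the density
  of the parameter U is well defined.\<close>
lemma C_above_c0: "0 < C x - c 0"
proof -
  obtain a where a: "sz a > 0" using nontriv by blast
  have pos: "0 < c (sz a)"
    using fin[of "sz a"] by (auto simp: c_def card_gt_0_iff)
  have "summable (\<lambda>n. c n * x ^ n)"
    using below_radius[of x] x_pos by (intro summable_in_conv_radius) auto
  then have sums: "(\<lambda>n. c (Suc n) * x ^ Suc n) sums (C x - c 0)"
    using sums_Suc_iff[of "\<lambda>n. c n * x ^ n"] by (simp add: C_powser summable_sums)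
  have "0 < (\<Sum>n. c (Suc n) * x ^ Suc n)"
    using sums pos a x_pos
    by (intro suminf_pos2[of _ "sz a - 1"]) (auto simp: c_def sums_iff)
  then show ?thesis using sums by (simp add: sums_iff)
qed

lemma C_pos: "0 < C x"
  using C_above_c0 by (simp add: c_def)

lemma forget_point_pmf:
  assumes "0 < y" "y \<le> x"
  shows "pmf (map_pmf fst (Gam y)) a = real (sz a) * y ^ sz a / (y * D y)"
  using pmf_forget_point[OF samplers] pointed_gf assms by simp

definition U :: "real measure" where
  "U = density (restrict_space lborel {0<..1})
         (\<lambda>u. ennreal (x * u * deriv C (x * u) / (u * (C x - c 0))))"

definition N :: "real \<Rightarrow> 'a measure" where
  "N u = measure_pmf (map_pmf fst (Gam (u * x)))"

lemma sampler_proc_split: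
  "sampler_proc sz x Gam = measure_pmf (bernoulli_pmf (c 0 / C x)) \<bind>
     (\<lambda>b. if b then measure_pmf (pmf_of_set {a. sz a = 0}) else U \<bind> N)"
  unfolding sampler_proc_def Let_def U_def N_def C_def c_def by (simp add: mult_ac)

lemma density_eq:
  assumes "u \<in> {0<..1}"
  shows "x * u * deriv C (x * u) / (u * (C x - c 0)) = x * D (x * u) / (C x - c 0)"
proof -
  have "0 \<le> x * u" "x * u \<le> x"
    using assms x_pos by (auto simp: mult_le_cancel_left1)
  then have "deriv C (x * u) = D (x * u)"
    by (rule DERIV_imp_deriv[OF C_deriv])
  then show ?thesis using assms by simp
qed

lemma density_measurable:
  "(\<lambda>u. ennreal (x * u * deriv C (x * u) / (u * (C x - c 0))))
     \<in> borel_measurable (restrict_space lborel {0<..1})"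
proof -
  have "(\<lambda>u. ennreal (x * D (x * u) / (C x - c 0))) \<in> borel_measurable (restrict_space lborel {0<..1})"
    by (rule measurable_restrict_space1) measurable
  then show ?thesis
    by (rule measurable_cong[THEN iffD1, rotated]) (simp add: space_restrict_space density_eq)
qed

text \<open>U is a probability law: x C'(x u) integrates over [0,1] to C x - C 0 = C x - c 0.\<close>
lemma U_prob: "prob_space U"
proof (rule prob_spaceI)
  define K where "K = C x - c 0"
  have deriv: "((\<lambda>u. C (x * u) / K) has_real_derivative x * D (x * u) / K) (at u)"
    if "u \<in> {0..1}" for u
  proof -
    have "0 \<le> x * u" "x * u \<le> x"
      using that x_pos by (auto simp: mult_le_cancel_left1)
    then have "((\<lambda>u. C (x * u)) has_real_derivative D (x * u) * x) (at u)"
      by (rule DERIV_chain2[OF C_deriv DERIV_cmult_Id])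
    from DERIV_cdivide[OF this, of K] show ?thesis by (simp add: mult.commute)
  qed
  define R where "R = restrict_space lborel {0<..1::real}"
  have "emeasure U (space U)
      = (\<integral>\<^sup>+u. ennreal (x * u * deriv C (x * u) / (u * K)) * indicator (space R) u \<partial>R)"
    unfolding U_def K_def R_def using emeasure_density[OF density_measurable sets.top] by simp
  also have "\<dots> = (\<integral>\<^sup>+u. ennreal (x * D (x * u) / K) \<partial>R)"
    by (rule nn_integral_cong) (simp add: R_def space_restrict_space density_eq K_def)
  also have "\<dots> = ennreal (C (x * 1) / K - C (x * 0) / K)"
    unfolding R_def
  proof (rule nn_integral_unit_interval_FTC[OF _ deriv])
    show "0 \<le> x * D (x * u) / K" if "u \<in> {0..1}" for u
      using that x_pos D_nonneg[of "x * u"] C_above_c0 by (simp add: K_def mult_le_cancel_left1)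
  qed measurable
  also have "C (x * 1) / K - C (x * 0) / K = 1"
    using C_above_c0 by (simp add: K_def C_powser diff_divide_distrib[symmetric])
  finally show "emeasure U (space U) = 1" by simp
qed

lemma N_measurable: "N \<in> measurable U (subprob_algebra (count_space UNIV))"
proof -
  have "(\<lambda>u. measure_pmf (map_pmf fst (Gam (u * x))))
      \<in> measurable (restrict_space lborel {0<..1}) (subprob_algebra (count_space UNIV))"
  proof (rule measurable_measure_pmf_family[OF countable_graded[OF fin]])
    fix a
    have "(\<lambda>u. real (sz a) * (u * x) ^ sz a / (u * x * D (u * x)))
        \<in> borel_measurable (restrict_space lborel {0<..1})"
      by (rule measurable_restrict_space1) measurable
    then show "(\<lambda>u. pmf (map_pmf fst (Gam (u * x))) a) \<in> borel_measurable (restrict_space lborel {0<..1})"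
      by (rule measurable_cong[THEN iffD1, rotated])
        (use x_pos in \<open>simp add: space_restrict_space forget_point_pmf mult_le_cancel_right1\<close>)
  qed
  then show ?thesis
    unfolding N_def[abs_def] U_def by (simp cong: measurable_cong_sets)
qed

lemma mixture_singleton:
  "emeasure (U \<bind> N) {a} = (if sz a = 0 then 0 else ennreal (x ^ sz a / (C x - c 0)))"
proof -
  define n where "n = sz a"
  define k where "k = x ^ n / (C x - c 0)"
  define R where "R = restrict_space lborel {0<..1::real}"
  have k_nonneg: "0 \<le> k" using x_pos C_above_c0 by (simp add: k_def)
  have N_mass: "(\<lambda>u. emeasure (N u) {a}) \<in> borel_measurable R"
    using measurable_compose[OF N_measurable measurable_emeasure_subprob_algebra[of "{a}"]]
    by (simp add: U_def R_def cong: measurable_cong_sets)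
  have integrand: "ennreal (x * u * deriv C (x * u) / (u * (C x - c 0))) * emeasure (N u) {a}
      = ennreal (k * real n * u ^ (n - 1))" if "u \<in> space R" for u
  proof -
    have u: "0 < u" "u * x \<le> x" "0 < u * x"
      using that x_pos by (auto simp: R_def space_restrict_space mult_le_cancel_right1)
    have "x * D (x * u) / (C x - c 0) * (real n * (u * x) ^ n / (u * x * D (u * x)))
        = k * real n * u ^ (n - 1)"
    proof (cases n)
      case (Suc m)
      then show ?thesis using u D_pos[of "u * x"] C_above_c0
        by (simp add: k_def mult.commute[of x u] field_simps)
    qed simp
    moreover have "0 \<le> x * D (x * u) / (C x - c 0)"
      using u x_pos D_pos[of "u * x"] C_above_c0 by (simp add: mult.commute)
    moreover have "0 \<le> real n * (u * x) ^ n / (u * x * D (u * x))"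
      using u D_pos[of "u * x"] by simp
    ultimately show ?thesis
      using that u by (simp add: R_def space_restrict_space density_eq N_def emeasure_pmf_single
          forget_point_pmf n_def ennreal_mult[symmetric])
  qed
  have "emeasure (U \<bind> N) {a} = (\<integral>\<^sup>+u. emeasure (N u) {a} \<partial>U)"
    by (rule emeasure_bind[OF _ N_measurable]) (auto simp: U_def)
  also have "\<dots> = (\<integral>\<^sup>+u. ennreal (x * u * deriv C (x * u) / (u * (C x - c 0))) * emeasure (N u) {a} \<partial>R)"
    unfolding U_def R_def using density_measurable N_mass[unfolded R_def] by (rule nn_integral_density)
  also have "\<dots> = (\<integral>\<^sup>+u. ennreal (k * real n * u ^ (n - 1)) \<partial>R)"
    by (rule nn_integral_cong) (rule integrand)
  also have "\<dots> = ennreal (k * 1 ^ n - k * 0 ^ n)"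
    unfolding R_def
  proof (rule nn_integral_unit_interval_FTC)
    show "((\<lambda>u. k * u ^ n) has_real_derivative k * real n * u ^ (n - 1)) (at u)" for u
      by (auto intro!: derivative_eq_intros)
  qed (use k_nonneg in auto)
  finally show ?thesis by (cases n) (simp_all add: k_def n_def)
qed

lemma size_zero_branch:
  "ennreal (c 0 / C x) * emeasure (pmf_of_set {a. sz a = 0}) {a}
     = (if sz a = 0 then ennreal (1 / C x) else 0)"
proof (cases "{a. sz a = 0} = {}")
  case True
  have "sz a \<noteq> 0" using True by auto
  moreover have "c 0 = 0" unfolding c_def True by simp
  ultimately show ?thesis by simp
next
  case nonempty: False
  then have "c 0 > 0"
    using fin[of 0] by (auto simp: c_def card_gt_0_iff)
  then show ?thesis
    using nonempty fin[of 0] C_pos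
    by (auto simp: emeasure_pmf_single pmf_of_set c_def ennreal_mult[symmetric])
qed

lemma sampler_proc_singleton: "emeasure (sampler_proc sz x Gam) {a} = ennreal (x ^ sz a / C x)"
proof -
  define p where "p = c 0 / C x"
  have p: "0 \<le> p" "p \<le> 1"
    using C_above_c0 C_pos by (auto simp: p_def c_def)
  have "subprob_space (U \<bind> N)"
    by (rule subprob_space_bind[OF prob_space_imp_subprob_space[OF U_prob] N_measurable])
  moreover have "sets (U \<bind> N) = sets (count_space UNIV)"
    by (rule sets_bind) (auto simp: N_def U_def)
  ultimately have mixture_subprob: "U \<bind> N \<in> space (subprob_algebra (count_space UNIV))"
    by (simp add: space_subprob_algebra)
  have "emeasure (sampler_proc sz x Gam) {a}
      = ennreal p * emeasure (pmf_of_set {a. sz a = 0}) {a} + ennreal (1 - p) * emeasure (U \<bind> N) {a}"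
    unfolding sampler_proc_split p_def[symmetric]
    by (rule emeasure_bernoulli_mixture[OF measure_pmf_in_subprob_algebra mixture_subprob _ p]) simp
  also have "\<dots> = ennreal (x ^ sz a / C x)"
  proof (cases "sz a = 0")
    case True
    have "ennreal p * emeasure (pmf_of_set {a. sz a = 0}) {a} = ennreal (x ^ sz a / C x)"
      unfolding p_def using size_zero_branch[of a] True by simp
    moreover have "emeasure (U \<bind> N) {a} = 0"
      using mixture_singleton[of a] True by simp
    ultimately show ?thesis by simp
  next
    case False
    have "ennreal (1 - p) * emeasure (U \<bind> N) {a}
        = ennreal (1 - p) * ennreal (x ^ sz a / (C x - c 0))"
      using False by (simp add: mixture_singleton)
    also have "\<dots> = ennreal ((1 - p) * (x ^ sz a / (C x - c 0)))"
      by (rule ennreal_mult[symmetric]) (use p x_pos C_above_c0 in auto)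
    also have "(1 - p) * (x ^ sz a / (C x - c 0)) = x ^ sz a / C x"
      using C_above_c0 C_pos by (simp add: p_def field_simps)
    finally have "ennreal (1 - p) * emeasure (U \<bind> N) {a} = ennreal (x ^ sz a / C x)" .
    moreover have "ennreal p * emeasure (pmf_of_set {a. sz a = 0}) {a} = 0"
      unfolding p_def using size_zero_branch[of a] False by simp
    ultimately show ?thesis by simp
  qed
  finally show ?thesis .
qed

end

theorem mainTheorem7:
  fixes sz :: "'a \<Rightarrow> nat" and x :: real and Gam :: "real \<Rightarrow> ('a \<times> nat) pmf"
  assumes fin: "\<And>n. finite {a. sz a = n}"
    and nontriv: "\<exists>a. sz a > 0"
    and rho_pos: "conv_radius (\<lambda>n. real (card {a. sz a = n})) > 0"
    and x_pos: "0 < x"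
    and x_lt: "ereal x < conv_radius (\<lambda>n. real (card {a. sz a = n}))"
    and samplers: "\<And>y. y \<in> {0<..x} \<Longrightarrow> boltzmann (pointed sz) (\<lambda>p. sz (fst p)) y (Gam y)"
  shows "\<forall>a. measure (sampler_proc sz x Gam) {a} = x ^ sz a / gf UNIV sz x"
proof
  fix a
  interpret pointed_setting sz x Gam
    using fin nontriv x_pos x_lt samplers by unfold_locales
  have "emeasure (sampler_proc sz x Gam) {a} = ennreal (x ^ sz a / C x)"
    by (rule sampler_proc_singleton)
  moreover have "0 \<le> x ^ sz a / C x"
    using x_pos C_pos by simp
  ultimately show "measure (sampler_proc sz x Gam) {a} = x ^ sz a / gf UNIV sz x"
    by (simp add: measure_def C_def)
qed

end
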